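(* Let $V$ be a population of $n$ individuals with pseudo-metric $d$, and let $k_1\le k_2$ be panel sizes. Let $\mathcal{G}$ and $\mathcal{H}$ be the outputs of the Greedy Capture procedure (defined in the context) with panel sizes $k_1$ and $k_2$ respectively. Then for every group $G\in\mathcal{G}$ with center $c_G$ and radius $r_G$ there exists a group $H\in\mathcal{H}$ with center $c_H$ and radius $r_H$ such that $d(c_H,c_G)\le 2r_G$ and $r_H\le r_G$.
   Context: $B(x,\delta)=\{u\in V: d(x,u)\le\delta\}$. Greedy Capture with panel size $K$ (Modified Greedy Capture with every individual initially its own group): maintain a set $U$ of uncovered individuals, initially $V$, and an output collection initially empty; increase $\delta$ continuously from $0$ while $U\ne\emptyset$. At each $\delta$: for each already formed group with center $c$, remove $U\cap B(c,\delta)$ from $U$; then, while some $x\in V$ has $|U\cap B(x,\delta)|\ge n/K$, form the group $U\cap B(x,\delta)$ with center $x$ and radius $\delta$, add it to the output and remove its members from $U$. Return the output collection. *)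

theory Defs
  imports Complex_Main
begin

definition pseudo_metric_on :: "'a set \<Rightarrow> ('a \<Rightarrow> 'a \<Rightarrow> real) \<Rightarrow> bool" where
  "pseudo_metric_on V d \<longleftrightarrow>
     (\<forall>x\<in>V. d x x = 0) \<and>
     (\<forall>x\<in>V. \<forall>y\<in>V. d x y = d y x) \<and>
     (\<forall>x\<in>V. \<forall>y\<in>V. \<forall>z\<in>V. d x z \<le> d x y + d y z)"

definition ball_in :: "'a set \<Rightarrow> ('a \<Rightarrow> 'a \<Rightarrow> real) \<Rightarrow> 'a \<Rightarrow> real \<Rightarrow> 'a set" where
  "ball_in V d x \<delta> = {u \<in> V. d x u \<le> \<delta>}"

text \<open>Uncovered individuals at time delta, once the groups with the listed centers
  have been formed (each formed group with center c has absorbed all of B(c,delta)).\<close>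
definition uncovered :: "'a set \<Rightarrow> ('a \<Rightarrow> 'a \<Rightarrow> real) \<Rightarrow> 'a list \<Rightarrow> real \<Rightarrow> 'a set" where
  "uncovered V d cs \<delta> = V - (\<Union>c\<in>set cs. ball_in V d c \<delta>)"

text \<open>A run of Greedy Capture with panel size K: the output is the list of formed
  groups (center, radius, members) in order of formation.  Any tie-breaking is allowed.  Condition (2): greediness -- between consecutive formations
  (and after the last one) no x has at least n/K uncovered individuals in its ball.\<close>
definition greedy_capture_run ::
  "'a set \<Rightarrow> ('a \<Rightarrow> 'a \<Rightarrow> real) \<Rightarrow> nat \<Rightarrow> ('a \<times> real \<times> 'a set) list \<Rightarrow> bool" where
  "greedy_capture_run V d K gs \<longleftrightarrow>
    (let m = length gs;
         c = (\<lambda>i. fst (gs ! i));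
         r = (\<lambda>i. fst (snd (gs ! i)));
         S = (\<lambda>i. snd (snd (gs ! i)));
         thr = real (card V) / real K
     in
     (\<forall>i<m. c i \<in> V \<and> 0 \<le> r i \<and> (\<forall>j<i. r j \<le> r i) \<and>
        S i = uncovered V d (map fst (take i gs)) (r i) \<inter> ball_in V d (c i) (r i) \<and>
        thr \<le> real (card (S i))) \<and>
     (\<forall>i\<le>m. \<forall>\<delta>\<ge>0. (i = m \<or> \<delta> < r i) \<and> (i = 0 \<or> r (i - 1) \<le> \<delta>) \<longrightarrow>
        \<not> (\<exists>x\<in>V. thr \<le> real (card (uncovered V d (map fst (take i gs)) \<delta> \<inter> ball_in V d x \<delta>)))))"

end

theory Submission
  imports Defs
begin

text \<open>Let \<open>G\<close> be a group of the first run with center \<open>c\<close> and radius \<open>r\<close>. The ball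
  \<open>B(c, r)\<close> contains \<open>G\<close>, so it has at least \<open>n/k\<^sub>1 \<ge> n/k\<^sub>2\<close> members. Consider the second
  run at time \<open>r\<close>, after its groups of radius at most \<open>r\<close> have been formed. If none of
  these groups had its center within \<open>2r\<close> of \<open>c\<close>, then by the triangle inequality none
  of their balls \<open>B(c\<^sub>H, r)\<close> would meet \<open>B(c, r)\<close>; the whole ball \<open>B(c, r)\<close> would still be
  uncovered, and greediness would have forced a new group to be formed at time \<open>r\<close>.\<close>

lemma ball_in_overlap_dist:
  assumes "pseudo_metric_on V d" "x \<in> V" "y \<in> V"
    and "u \<in> ball_in V d x r" "u \<in> ball_in V d y s"
  shows "d x y \<le> r + s"
proof -
  have "u \<in> V" "d x u \<le> r" "d y u \<le> s"
    using assms(4,5) unfolding ball_in_def by simp_all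
  moreover have "d x y \<le> d x u + d u y" "d u y = d y u"
    using assms(1-3) \<open>u \<in> V\<close> unfolding pseudo_metric_on_def by blast+
  ultimately show ?thesis by linarith
qed

lemma ball_in_subset_uncovered:
  assumes "\<And>c. c \<in> set cs \<Longrightarrow> ball_in V d c \<delta> \<inter> ball_in V d x \<delta> = {}"
  shows "ball_in V d x \<delta> \<subseteq> uncovered V d cs \<delta>"
  using assms unfolding uncovered_def ball_in_def by blast

lemma greedy_capture_run_group:
  assumes "greedy_capture_run V d K gs" "(c, r, S) \<in> set gs" "finite V"
  shows "c \<in> V" "0 \<le> r" "real (card V) / real K \<le> real (card (ball_in V d c r))"
proof -
  obtain i where "i < length gs" "gs ! i = (c, r, S)"
    using assms(2) by (metis in_set_conv_nth)
  then have "c \<in> V" "0 \<le> r" "S \<subseteq> ball_in V d c r" "real (card V) / real K \<le> real (card S)"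
    using assms(1) unfolding greedy_capture_run_def Let_def by auto
  moreover have "card S \<le> card (ball_in V d c r)"
    using \<open>S \<subseteq> ball_in V d c r\<close> assms(3) by (intro card_mono) (simp_all add: ball_in_def)
  ultimately show "c \<in> V" "0 \<le> r" "real (card V) / real K \<le> real (card (ball_in V d c r))"
    by simp_all
qed

lemma greedy_capture_run_no_dense_ball:
  assumes "greedy_capture_run V d K gs" "p \<le> length gs" "0 \<le> \<delta>"
    and "p = length gs \<or> \<delta> < fst (snd (gs ! p))"
    and "p = 0 \<or> fst (snd (gs ! (p - 1))) \<le> \<delta>" "x \<in> V"
  shows "real (card (uncovered V d (map fst (take p gs)) \<delta> \<inter> ball_in V d x \<delta>))
           < real (card V) / real K"
proof -
  have "\<forall>i\<le>length gs. \<forall>\<delta>\<ge>0. (i = length gs \<or> \<delta> < fst (snd (gs ! i))) \<and>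
          (i = 0 \<or> fst (snd (gs ! (i - 1))) \<le> \<delta>) \<longrightarrow>
          \<not> (\<exists>x\<in>V. real (card V) / real K
                 \<le> real (card (uncovered V d (map fst (take i gs)) \<delta> \<inter> ball_in V d x \<delta>)))"
    using assms(1) unfolding greedy_capture_run_def Let_def by (elim conjE)
  from this[rule_format, OF assms(2,3) conjI[OF assms(4,5)]] show ?thesis
    using assms(6) by (simp add: not_le)
qed

text \<open>Greediness is applied at time \<open>r\<close> right after the longest prefix of groups of radius
  at most \<open>r\<close>.\<close>

lemma greedy_capture_run_near_dense_ball:
  assumes run: "greedy_capture_run V d K gs" and "finite V" "pseudo_metric_on V d"
    and "x \<in> V" "0 \<le> r"
    and dense: "real (card V) / real K \<le> real (card (ball_in V d x r))"
  shows "\<exists>(c, s, S) \<in> set gs. d c x \<le> 2 * r \<and> s \<le> r"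
proof (rule ccontr)
  assume far: "\<not> ?thesis"
  define P where "P = (\<lambda>g :: 'a \<times> real \<times> 'a set. fst (snd g) \<le> r)"
  define p where "p = length (takeWhile P gs)"
  have prefix: "takeWhile P gs = take p gs"
    unfolding p_def by (rule takeWhile_eq_take)
  have p_le: "p \<le> length gs"
    unfolding p_def by (rule length_takeWhile_le)
  have "ball_in V d c r \<inter> ball_in V d x r = {}" if c: "c \<in> set (map fst (take p gs))" for c
  proof (rule ccontr)
    obtain s S where "(c, s, S) \<in> set (takeWhile P gs)"
      using c unfolding prefix[symmetric] by force
    then have "(c, s, S) \<in> set gs" "s \<le> r"
      unfolding P_def by (auto dest: set_takeWhileD)
    moreover assume "ball_in V d c r \<inter> ball_in V d x r \<noteq> {}"
    then have "d c x \<le> 2 * r"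
      using ball_in_overlap_dist[OF assms(3) greedy_capture_run_group(1)[OF run _ assms(2)] assms(4)]
        \<open>(c, s, S) \<in> set gs\<close> by fastforce
    ultimately show False
      using far by blast
  qed
  then have covered: "uncovered V d (map fst (take p gs)) r \<inter> ball_in V d x r = ball_in V d x r"
    by (intro Int_absorb1 ball_in_subset_uncovered)
  have after: "p = length gs \<or> r < fst (snd (gs ! p))"
  proof (cases "p < length gs")
    case True
    then have "\<not> P (gs ! p)"
      unfolding p_def by (rule nth_length_takeWhile)
    then show ?thesis
      unfolding P_def by simp
  qed (use p_le in simp)
  have before: "p = 0 \<or> fst (snd (gs ! (p - 1))) \<le> r"
  proof (cases p)
    case (Suc q)
    then have "gs ! q \<in> set (takeWhile P gs)"
      using prefix p_le by (metis lessI nth_mem nth_take length_take min.absorb2)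
    then show ?thesis
      using Suc unfolding P_def by (auto dest: set_takeWhileD)
  qed simp
  show False
    using greedy_capture_run_no_dense_ball[OF run p_le assms(5) after before assms(4)] dense
    unfolding covered by linarith
qed

theorem lemma5:
  fixes V :: "'a set" and d :: "'a \<Rightarrow> 'a \<Rightarrow> real" and k1 k2 :: nat
    and Gs Hs :: "('a \<times> real \<times> 'a set) list"
  assumes "finite V"
    and "pseudo_metric_on V d"
    and "0 < k1" and "k1 \<le> k2"
    and "greedy_capture_run V d k1 Gs"
    and "greedy_capture_run V d k2 Hs"
  shows "\<forall>(cG, rG, G) \<in> set Gs. \<exists>(cH, rH, H) \<in> set Hs. d cH cG \<le> 2 * rG \<and> rH \<le> rG"
proof clarify
  fix c r S
  assume "(c, r, S) \<in> set Gs"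
  note G = greedy_capture_run_group[OF assms(5) this assms(1)]
  have "real (card V) / real k2 \<le> real (card V) / real k1"
    using assms(3,4) by (simp add: frac_le)
  with G(3) have "real (card V) / real k2 \<le> real (card (ball_in V d c r))"
    by linarith
  then show "\<exists>(cH, rH, H) \<in> set Hs. d cH c \<le> 2 * r \<and> rH \<le> r"
    using greedy_capture_run_near_dense_ball[OF assms(6,1,2) G(1,2)] by blast
qed

end
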